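(* For every integer $n>0$, $\mathrm{DE2}(n)+\mathrm{DE2}(n-3)$ equals the number of partitions of $n$ into parts each of which is greater than $1$ and not divisible by $4$.
   Context: For a nonnegative integer $n$, $\mathrm{DE2}(n)$ denotes the number of partitions of $n$ in which no even part is repeated, and the largest part is odd and appears at least twice (so $\mathrm{DE2}(0)=0$); set $\mathrm{DE2}(m)=0$ for $m<0$. Equivalently, $\sum_{n\ge0}\mathrm{DE2}(n)q^n=\sum_{n\ge0}\frac{(-q^2;q^2)_n q^{4n+2}}{(q;q^2)_{n+1}}$, where $(a;q)_n=\prod_{j=0}^{n-1}(1-aq^j)$. *)

theory Defs
  imports Main "HOL-Library.Multiset"
begin

definition partitions :: "nat \<Rightarrow> nat multiset set" where
  "partitions n = {M. (\<forall>x\<in>#M. 0 < x) \<and> sum_mset M = n}"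

definition DE2 :: "int \<Rightarrow> nat" where
  "DE2 m = (if m < 0 then 0 else
     card {M \<in> partitions (nat m).
             (\<forall>x\<in>#M. even x \<longrightarrow> count M x \<le> 1) \<and>
             M \<noteq> {#} \<and> odd (Max (set_mset M)) \<and> 2 \<le> count M (Max (set_mset M))})"

end

theory Submission
  imports Defs "HOL-Computational_Algebra.Formal_Power_Series"
begin

(* Truncate all generating functions at parts of size at most k, and let T_k be the generating
   function of partitions with parts at most k and no repeated even part.  A DE2-partition with
   largest part j contributes q^(2j) T_j; summing over odd j \<le> 2N+1 gives the generating function
   D_(2N+1) of DE2-partitions with parts at most 2N+1, and the sum telescopes:
     (1 + q^3) D_(2N+1) = T_(2N+1) (1 - q + q^(2N+2) + q^(4N+5)) - 1.
   By Euler, (1 - q) T_k is the product of 1 + q^j over even j divided by the product of 1 - q^j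
   over odd j > 1, and Glaisher's identity (1 + q^(2i)) (1 - q^(2i)) = 1 - q^(4i) shows that modulo
   q^(k+1) this is the generating function of partitions into parts > 1 not divisible by 4.
   Comparing coefficients of q^n for k = 2n + 1 gives the theorem. *)

unbundle fps_syntax

lemma member_le_sum_mset: "(x::nat) \<in># M \<Longrightarrow> x \<le> sum_mset M"
  by (metis le_add1 sum_mset.remove)

lemma size_le_sum_mset: "(\<forall>x\<in>#M. 0 < (x::nat)) \<Longrightarrow> size M \<le> sum_mset M"
  by (induction M) auto

lemma Max_set_mset_eqI: "j \<in># M \<Longrightarrow> \<forall>x\<in>#M. x \<le> j \<Longrightarrow> Max (set_mset M) = j"
  by (intro Max_eqI) auto

lemma add_mset_twice_diff: "2 \<le> count M j \<Longrightarrow> add_mset j (add_mset j (M - {#j#} - {#j#})) = M"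
  by (auto simp: multiset_eq_iff)

lemma card_eq_card_filter_add: "finite S \<Longrightarrow> card S = card {x\<in>S. P x} + card {x\<in>S. \<not> P x}"
  by (subst card_Un_disjoint[symmetric]) (auto intro: arg_cong[where f = card])

lemma power_by_exponent: "a = b + c * d \<Longrightarrow> (y::'a::monoid_mult) ^ a = y ^ b * (y ^ c) ^ d"
  by (simp add: power_add power_mult)

lemma prod_even_reindex:
  fixes f :: "nat \<Rightarrow> 'a::comm_monoid_mult"
  shows "(\<Prod>j=1..k. if even j then f j else 1) = (\<Prod>i=1..k div 2. f (2 * i))"
proof (induction k)
  case 0
  then show ?case by simp
next
  case (Suc k)
  show ?case
  proof (cases "even (Suc k)")
    case True
    then have "Suc k div 2 = Suc (k div 2)" and "2 * Suc (k div 2) = Suc k"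
      by presburger+
    then show ?thesis using Suc.IH True by simp
  next
    case False
    then have "Suc k div 2 = k div 2"
      by presburger
    then show ?thesis using Suc.IH False by simp
  qed
qed

lemma dvd_prod_diff_one:
  fixes f :: "'b \<Rightarrow> 'a::comm_ring_1"
  assumes "\<And>i. i \<in> S \<Longrightarrow> a dvd f i - 1"
  shows "a dvd prod f S - 1"
proof (cases "finite S")
  case True
  then show ?thesis using assms
  proof (induction S rule: finite_induct)
    case empty
    then show ?case by simp
  next
    case (insert i S)
    have "a dvd f i * (prod f S - 1) + (f i - 1)"
      using insert by (simp add: dvd_add)
    also have "f i * (prod f S - 1) + (f i - 1) = prod f (insert i S) - 1"
      using insert.hyps by (simp add: algebra_simps)
    finally show ?case .
  qed
next
  case False
  then show ?thesis by simp
qed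

lemma fps_X_power_neq_one: "n \<noteq> 0 \<Longrightarrow> fps_X ^ n \<noteq> (1 :: 'a::semiring_1 fps)"
  by (metis fps_X_power_nth fps_one_nth zero_neq_one)

lemma fps_nth_eq_if_X_power_dvd_diff:
  assumes "fps_X ^ n dvd f - g" and "i < n"
  shows "f $ i = (g :: 'a::comm_ring_1 fps) $ i"
proof -
  obtain h where "f - g = fps_X ^ n * h"
    using assms(1) by blast
  then have "(f - g) $ i = 0"
    using assms(2) by (simp add: fps_X_power_mult_nth)
  then show ?thesis by simp
qed

lemma finite_partitions: "finite (partitions m)"
proof (rule finite_subset)
  show "partitions m \<subseteq> (\<Union>s\<le>m. multisets_of_size {1..m} s)"
  proof
    fix M assume M: "M \<in> partitions m"
    then have "size M \<le> m"
      using size_le_sum_mset[of M] unfolding partitions_def by auto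
    then show "M \<in> (\<Union>s\<le>m. multisets_of_size {1..m} s)"
      using M member_le_sum_mset unfolding partitions_def multisets_of_size_def
      by (auto simp: Suc_le_eq)
  qed
qed auto

definition restricted_partitions ::
    "(nat \<Rightarrow> bool) \<Rightarrow> (nat \<Rightarrow> bool) \<Rightarrow> nat \<Rightarrow> nat \<Rightarrow> nat multiset set" where
  "restricted_partitions A D k m =
     {M \<in> partitions m. (\<forall>x\<in>#M. x \<le> k \<and> A x) \<and> (\<forall>x\<in>#M. D x \<longrightarrow> count M x \<le> 1)}"

lemma finite_restricted_partitions: "finite (restricted_partitions A D k m)"
  unfolding restricted_partitions_def by (rule finite_subset[OF _ finite_partitions]) auto

lemma restricted_partitions_0: "restricted_partitions A D 0 m = (if m = 0 then {{#}} else {})"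
proof -
  have "M = {#}" if "M \<in> restricted_partitions A D 0 m" for M
    using that unfolding restricted_partitions_def partitions_def by (cases M) auto
  moreover have "{#} \<in> restricted_partitions A D 0 m \<longleftrightarrow> m = 0"
    unfolding restricted_partitions_def partitions_def by auto
  ultimately show ?thesis by (auto split: if_splits)
qed

lemma restricted_partitions_without_part:
  "{M \<in> restricted_partitions A D (Suc k) m. Suc k \<notin># M} = restricted_partitions A D k m"
  unfolding restricted_partitions_def by (auto simp: le_Suc_eq)

lemma restricted_partitions_with_part:
  assumes "A (Suc k)" "Suc k \<le> m"
  shows "{M \<in> restricted_partitions A D (Suc k) m. Suc k \<in># M} =
         add_mset (Suc k) ` restricted_partitions A D (if D (Suc k) then k else Suc k) (m - Suc k)"
    (is "?L = add_mset ?j ` restricted_partitions A D ?k' (m - ?j)")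
proof (intro equalityI subsetI)
  fix M assume "M \<in> ?L"
  then have M: "M \<in> restricted_partitions A D ?j m" and j: "?j \<in># M" by auto
  have "M - {#?j#} \<in> restricted_partitions A D ?k' (m - ?j)"
  proof -
    have "count M ?j \<le> 1" if "D ?j"
      using M j that unfolding restricted_partitions_def by blast
    then have "?j \<notin># M - {#?j#}" if "D ?j"
      using that by (simp add: not_in_iff)
    then show ?thesis
      using M j unfolding restricted_partitions_def partitions_def
      by (auto dest: in_diffD simp: le_Suc_eq sum_mset.remove)
  qed
  then show "M \<in> add_mset ?j ` restricted_partitions A D ?k' (m - ?j)"
    using j by (metis image_eqI insert_DiffM)
next
  fix M assume "M \<in> add_mset ?j ` restricted_partitions A D ?k' (m - ?j)"
  then obtain M' where M': "M' \<in> restricted_partitions A D ?k' (m - ?j)" and M: "M = add_mset ?j M'"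
    by blast
  have "?j \<notin># M'" if "D ?j"
    using M' that unfolding restricted_partitions_def by auto
  then show "M \<in> ?L"
    using M' assms unfolding M restricted_partitions_def partitions_def
    by (auto simp: not_in_iff split: if_splits)
qed

lemma restricted_partitions_unbounded:
  "m \<le> k \<Longrightarrow> restricted_partitions A (\<lambda>_. False) k m = {M \<in> partitions m. \<forall>x\<in>#M. A x}"
  unfolding restricted_partitions_def partitions_def by (auto dest: member_le_sum_mset)

definition restricted_gf :: "(nat \<Rightarrow> bool) \<Rightarrow> (nat \<Rightarrow> bool) \<Rightarrow> nat \<Rightarrow> int fps" where
  "restricted_gf A D k = Abs_fps (\<lambda>m. int (card (restricted_partitions A D k m)))"

lemma restricted_gf_nth: "restricted_gf A D k $ m = int (card (restricted_partitions A D k m))"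
  by (simp add: restricted_gf_def)

lemma restricted_gf_0: "restricted_gf A D 0 = 1"
  by (rule fps_ext) (simp add: restricted_gf_nth restricted_partitions_0)

lemma restricted_gf_Suc:
  "restricted_gf A D (Suc k) = restricted_gf A D k +
     (if A (Suc k) then fps_X ^ Suc k * restricted_gf A D (if D (Suc k) then k else Suc k) else 0)"
proof (rule fps_ext)
  fix m
  let ?j = "Suc k" and ?k' = "if D (Suc k) then k else Suc k"
  have split: "card (restricted_partitions A D ?j m) =
      card (restricted_partitions A D k m) + card {M \<in> restricted_partitions A D ?j m. ?j \<in># M}"
    using card_eq_card_filter_add[OF finite_restricted_partitions, of A D ?j m "\<lambda>M. ?j \<notin># M"]
    by (simp add: restricted_partitions_without_part)
  have with_part: "card {M \<in> restricted_partitions A D ?j m. ?j \<in># M} =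
        (if A ?j \<and> ?j \<le> m then card (restricted_partitions A D ?k' (m - ?j)) else 0)"
  proof (cases "A ?j \<and> ?j \<le> m")
    case True
    then show ?thesis
      by (simp add: restricted_partitions_with_part card_image inj_on_def)
  next
    case False
    then have none: "{M \<in> restricted_partitions A D ?j m. ?j \<in># M} = {}"
      unfolding restricted_partitions_def partitions_def
      by (auto dest: member_le_sum_mset)
    show ?thesis using False by (auto simp: none)
  qed
  show "restricted_gf A D ?j $ m =
      (restricted_gf A D k + (if A ?j then fps_X ^ ?j * restricted_gf A D ?k' else 0)) $ m"
    unfolding restricted_gf_nth fps_add_nth split with_part
    by (simp add: restricted_gf_nth fps_X_power_mult_nth not_less del: power_Suc)
qed

lemma restricted_gf_Suc_excluded: "\<not> A (Suc k) \<Longrightarrow> restricted_gf A D (Suc k) = restricted_gf A D k"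
  by (simp add: restricted_gf_Suc)

lemma restricted_gf_Suc_distinct:
  "A (Suc k) \<Longrightarrow> D (Suc k) \<Longrightarrow> restricted_gf A D (Suc k) = restricted_gf A D k * (1 + fps_X ^ Suc k)"
  by (simp add: restricted_gf_Suc algebra_simps del: power_Suc)

lemma restricted_gf_Suc_repeatable:
  assumes "A (Suc k)" "\<not> D (Suc k)"
  shows "restricted_gf A D (Suc k) * (1 - fps_X ^ Suc k) = restricted_gf A D k"
proof -
  have "restricted_gf A D (Suc k) = restricted_gf A D k + fps_X ^ Suc k * restricted_gf A D (Suc k)"
    using assms by (subst restricted_gf_Suc) simp
  then show ?thesis by (simp add: algebra_simps)
qed

lemma restricted_gf_product:
  "restricted_gf A D k * (\<Prod>j=1..k. if A j \<and> \<not> D j then 1 - fps_X ^ j else 1) =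
   (\<Prod>j=1..k. if A j \<and> D j then 1 + fps_X ^ j else 1)"
proof (induction k)
  case 0
  then show ?case by (simp add: restricted_gf_0)
next
  case (Suc k)
  consider "\<not> A (Suc k)" | "A (Suc k)" "D (Suc k)" | "A (Suc k)" "\<not> D (Suc k)"
    by blast
  then show ?case
  proof cases
    case 1
    then show ?thesis using Suc.IH by (simp add: restricted_gf_Suc_excluded)
  next
    case 2
    then show ?thesis using Suc.IH
      by (simp add: restricted_gf_Suc_distinct ac_simps del: power_Suc)
  next
    case 3
    let ?P = "\<lambda>n. \<Prod>j=1..n. if A j \<and> \<not> D j then 1 - fps_X ^ j else 1"
    let ?E = "\<lambda>n. \<Prod>j=1..n. if A j \<and> D j then 1 + fps_X ^ j else 1"
    have "restricted_gf A D (Suc k) * ?P (Suc k) =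
          restricted_gf A D (Suc k) * (1 - fps_X ^ Suc k) * ?P k"
      using 3 by (simp add: ac_simps del: power_Suc)
    also have "\<dots> = restricted_gf A D k * ?P k"
      by (simp only: restricted_gf_Suc_repeatable[of A k D, OF 3])
    also have "\<dots> = ?E (Suc k)"
      using 3 Suc.IH by simp
    finally show ?thesis .
  qed
qed

abbreviation even_distinct_gf :: "nat \<Rightarrow> int fps" where
  "even_distinct_gf \<equiv> restricted_gf (\<lambda>_. True) even"

definition DE2_partitions :: "nat \<Rightarrow> nat \<Rightarrow> nat multiset set" where
  "DE2_partitions k m = {M \<in> restricted_partitions (\<lambda>_. True) even k m.
     M \<noteq> {#} \<and> odd (Max (set_mset M)) \<and> 2 \<le> count M (Max (set_mset M))}"

lemma DE2_eq_card_DE2_partitions: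
  assumes "m \<le> k"
  shows "DE2 (int m) = card (DE2_partitions k m)"
proof -
  have "{M \<in> partitions m. (\<forall>x\<in>#M. even x \<longrightarrow> count M x \<le> 1) \<and>
          M \<noteq> {#} \<and> odd (Max (set_mset M)) \<and> 2 \<le> count M (Max (set_mset M))} = DE2_partitions k m"
    using assms unfolding DE2_partitions_def restricted_partitions_def partitions_def
    by (auto dest: member_le_sum_mset)
  then show ?thesis unfolding DE2_def by simp
qed

lemma finite_DE2_partitions: "finite (DE2_partitions k m)"
  unfolding DE2_partitions_def using finite_restricted_partitions by simp

lemma DE2_partitions_without_part:
  "{M \<in> DE2_partitions (Suc k) m. Suc k \<notin># M} = DE2_partitions k m"
  using restricted_partitions_without_part[of "\<lambda>_. True" even k m]
  unfolding DE2_partitions_def by blast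

lemma DE2_partitions_with_part:
  assumes "odd (Suc k)" "2 * Suc k \<le> m"
  shows "{M \<in> DE2_partitions (Suc k) m. Suc k \<in># M} =
         (\<lambda>M. add_mset (Suc k) (add_mset (Suc k) M)) `
           restricted_partitions (\<lambda>_. True) even (Suc k) (m - 2 * Suc k)"
    (is "?L = ?double ` restricted_partitions _ _ ?j _")
proof (intro equalityI subsetI)
  fix M assume "M \<in> ?L"
  then have M: "M \<in> restricted_partitions (\<lambda>_. True) even ?j m" and j: "?j \<in># M"
    and twice: "2 \<le> count M ?j"
    unfolding DE2_partitions_def restricted_partitions_def
    by (auto simp: Max_set_mset_eqI)
  define M' where "M' = M - {#?j#} - {#?j#}"
  have M_eq: "M = ?double M'"
    using add_mset_twice_diff[OF twice] unfolding M'_def by simp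
  have "sum_mset M' = m - 2 * ?j"
    using M unfolding restricted_partitions_def partitions_def by (subst (asm) M_eq) auto
  moreover have "count M' x \<le> count M x" for x
    unfolding M'_def by simp
  ultimately have "M' \<in> restricted_partitions (\<lambda>_. True) even ?j (m - 2 * ?j)"
    using M unfolding restricted_partitions_def partitions_def
    by (auto simp: M'_def dest: in_diffD intro: le_trans)
  then show "M \<in> ?double ` restricted_partitions (\<lambda>_. True) even ?j (m - 2 * ?j)"
    using M_eq by blast
next
  fix M assume "M \<in> ?double ` restricted_partitions (\<lambda>_. True) even ?j (m - 2 * ?j)"
  then obtain M' where M': "M' \<in> restricted_partitions (\<lambda>_. True) even ?j (m - 2 * ?j)"
    and M: "M = ?double M'" by blast
  have "Max (set_mset M) = ?j"
    using M' unfolding M restricted_partitions_def by (intro Max_set_mset_eqI) auto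
  then show "M \<in> ?L"
    using M' assms unfolding M DE2_partitions_def restricted_partitions_def partitions_def
    by auto
qed

lemma DE2_partitions_with_part_empty:
  assumes "\<not> (odd (Suc k) \<and> 2 * Suc k \<le> m)"
  shows "{M \<in> DE2_partitions (Suc k) m. Suc k \<in># M} = {}"
proof -
  have "odd (Suc k) \<and> 2 * Suc k \<le> m" if M: "M \<in> DE2_partitions (Suc k) m" "Suc k \<in># M" for M
  proof -
    have "Max (set_mset M) = Suc k"
      using M unfolding DE2_partitions_def restricted_partitions_def by (intro Max_set_mset_eqI) auto
    then have "odd (Suc k)" "2 \<le> count M (Suc k)" "sum_mset M = m"
      using M unfolding DE2_partitions_def restricted_partitions_def partitions_def by auto
    moreover obtain R where "M = add_mset (Suc k) (add_mset (Suc k) R)"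
      using add_mset_twice_diff[OF \<open>2 \<le> count M (Suc k)\<close>] by metis
    ultimately show ?thesis by simp
  qed
  then show ?thesis using assms by blast
qed

(* DE2_gf (2 * N + 1) is the partial sum n \<le> N of the series in the statement:
   q^(4n+2) (-q^2;q^2)_n / (q;q^2)_(n+1) = q^(2(2n+1)) * even_distinct_gf (2n+1). *)
definition DE2_gf :: "nat \<Rightarrow> int fps" where
  "DE2_gf k = Abs_fps (\<lambda>m. int (card (DE2_partitions k m)))"

lemma DE2_gf_nth: "DE2_gf k $ m = int (card (DE2_partitions k m))"
  by (simp add: DE2_gf_def)

lemma DE2_gf_0: "DE2_gf 0 = 0"
  by (rule fps_ext) (simp add: DE2_gf_nth DE2_partitions_def restricted_partitions_0)

lemma DE2_gf_Suc:
  "DE2_gf (Suc k) = DE2_gf k +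
     (if odd (Suc k) then fps_X ^ (2 * Suc k) * even_distinct_gf (Suc k) else 0)"
proof (rule fps_ext)
  fix m
  let ?j = "Suc k"
  have split: "card (DE2_partitions ?j m) =
      card (DE2_partitions k m) + card {M \<in> DE2_partitions ?j m. ?j \<in># M}"
    using card_eq_card_filter_add[OF finite_DE2_partitions, of ?j m "\<lambda>M. ?j \<notin># M"]
    by (simp add: DE2_partitions_without_part)
  have with_part: "card {M \<in> DE2_partitions ?j m. ?j \<in># M} =
      (if odd ?j \<and> 2 * ?j \<le> m
       then card (restricted_partitions (\<lambda>_. True) even ?j (m - 2 * ?j)) else 0)"
    by (simp add: DE2_partitions_with_part DE2_partitions_with_part_empty card_image inj_on_def)
  show "DE2_gf ?j $ m =
      (DE2_gf k + (if odd ?j then fps_X ^ (2 * ?j) * even_distinct_gf ?j else 0)) $ m"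
    unfolding DE2_gf_nth fps_add_nth split with_part
    by (simp add: DE2_gf_nth restricted_gf_nth fps_X_power_mult_nth not_less del: power_Suc)
qed

lemma DE2_shift_nth:
  assumes "m \<le> k"
  shows "((1 + fps_X ^ 3) * DE2_gf k) $ m = int (DE2 (int m) + DE2 (int m - 3))"
proof (cases "m < 3")
  case True
  then have "DE2 (int m - 3) = 0"
    unfolding DE2_def by simp
  then show ?thesis
    using True assms by (simp add: distrib_right fps_X_power_mult_nth DE2_gf_nth DE2_eq_card_DE2_partitions)
next
  case False
  then have "int m - 3 = int (m - 3)" by simp
  then show ?thesis
    using False assms DE2_eq_card_DE2_partitions[of "m - 3" k]
    by (simp add: distrib_right fps_X_power_mult_nth DE2_gf_nth DE2_eq_card_DE2_partitions)
qed

lemma telescoping_base: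
  fixes X D T :: "'a::idom"
  assumes "T * (1 - X) = 1" and "D = X ^ 2 * T"
  shows "(1 + X ^ 3) * D = T * (1 - X + X ^ 2 + X ^ 5) - 1"
  using assms by algebra

(* x stands for q^(2N+2). *)
lemma telescoping_step:
  fixes X x D D' T T' :: "'a::idom"
  assumes "(1 + X ^ 3) * D = T * (1 - X + x + X * x ^ 2) - 1"
    and "D' = D + X ^ 2 * x ^ 2 * T'"
    and "T * (1 + x) = T' * (1 - X * x)"
  shows "(1 + X ^ 3) * D' = T' * (1 - X + X ^ 2 * x + X ^ 5 * x ^ 2) - 1"
  using assms by algebra

lemma DE2_gf_telescoping:
  "(1 + fps_X ^ 3) * DE2_gf (2 * N + 1) =
   even_distinct_gf (2 * N + 1) * (1 - fps_X + fps_X ^ (2 * N + 2) + fps_X ^ (4 * N + 5)) - 1"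
proof (induction N)
  case 0
  have "even_distinct_gf 1 * (1 - fps_X) = 1"
    using restricted_gf_Suc_repeatable[of "\<lambda>_. True" 0 even] by (simp add: restricted_gf_0)
  moreover have "DE2_gf 1 = fps_X ^ 2 * even_distinct_gf 1"
    using DE2_gf_Suc[of 0] by (simp add: DE2_gf_0)
  ultimately show ?case
    unfolding mult_0_right add_0 by (rule telescoping_base)
next
  case (Suc N)
  define x :: "int fps" where "x = fps_X ^ (2 * N + 2)"
  have T_even: "even_distinct_gf (2 * N + 2) = even_distinct_gf (2 * N + 1) * (1 + x)"
    using restricted_gf_Suc_distinct[of "\<lambda>_. True" "2 * N + 1" even] by (simp add: x_def)
  have T_odd: "even_distinct_gf (2 * N + 3) * (1 - fps_X * x) = even_distinct_gf (2 * N + 2)"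
    using restricted_gf_Suc_repeatable[of "\<lambda>_. True" "2 * N + 2" even]
    by (simp add: x_def numeral_3_eq_3)
  have "DE2_gf (2 * N + 3) = DE2_gf (2 * N + 1) + fps_X ^ (2 * (2 * N + 3)) * even_distinct_gf (2 * N + 3)"
    using DE2_gf_Suc[of "2 * N + 2"] DE2_gf_Suc[of "2 * N + 1"]
    by (simp add: numeral_3_eq_3 del: power_Suc)
  also have "fps_X ^ (2 * (2 * N + 3)) = fps_X ^ 2 * x ^ 2"
    unfolding x_def by (subst power_by_exponent[of _ 2 "2 * N + 2" 2]) simp_all
  finally have D_step: "DE2_gf (2 * N + 3) = DE2_gf (2 * N + 1) + fps_X ^ 2 * x ^ 2 * even_distinct_gf (2 * N + 3)"
    by (simp only: mult.assoc)
  have "fps_X ^ (4 * N + 5) = fps_X * x ^ 2"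
    unfolding x_def by (subst power_by_exponent[of _ 1 "2 * N + 2" 2]) simp_all
  then have "(1 + fps_X ^ 3) * DE2_gf (2 * N + 1) =
      even_distinct_gf (2 * N + 1) * (1 - fps_X + x + fps_X * x ^ 2) - 1"
    using Suc.IH by (simp add: x_def)
  then have "(1 + fps_X ^ 3) * DE2_gf (2 * N + 3) =
      even_distinct_gf (2 * N + 3) * (1 - fps_X + fps_X ^ 2 * x + fps_X ^ 5 * x ^ 2) - 1"
    using D_step T_even T_odd by (intro telescoping_step) auto
  moreover have "fps_X ^ (2 * Suc N + 2) = fps_X ^ 2 * x"
    unfolding x_def by (subst power_by_exponent[of _ 2 "2 * N + 2" 1]) simp_all
  moreover have "fps_X ^ (4 * Suc N + 5) = fps_X ^ 5 * x ^ 2"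
    unfolding x_def by (subst power_by_exponent[of _ 5 "2 * N + 2" 2]) simp_all
  ultimately show ?case
    by (simp add: numeral_3_eq_3 del: power_Suc)
qed

(* Both sides times the product of 1 - q^(4i) over i \<le> n div 2 (the factors 1 - q^(2i) with
   even i) equal the product of 1 - q^(4i) over i \<le> n, as (1 + q^(2i)) (1 - q^(2i)) = 1 - q^(4i). *)
lemma glaisher_product:
  "(\<Prod>i=1..n. 1 + fps_X ^ (2 * i)) * (\<Prod>i=1..n. if odd i then 1 - fps_X ^ (2 * i) else 1) =
   (\<Prod>i=n div 2 + 1..n. 1 - fps_X ^ (4 * i) :: int fps)"
    (is "?E * ?O = ?H")
proof -
  let ?R = "\<Prod>i=1..n div 2. 1 - fps_X ^ (4 * i) :: int fps"
  have "?R = (\<Prod>i=1..n. if even i then 1 - fps_X ^ (2 * i) else 1)"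
    by (subst prod_even_reindex) simp
  then have "?E * ?O * ?R = (\<Prod>i=1..n. (1 + fps_X ^ (2 * i)) * (1 - fps_X ^ (2 * i)))"
    by (simp add: mult.assoc flip: prod.distrib) (intro prod.cong refl, simp)
  also have "\<dots> = (\<Prod>i=1..n. 1 - fps_X ^ (4 * i))"
    by (simp add: algebra_simps flip: power_add)
  also have "\<dots> = ?H * ?R"
    using prod.ub_add_nat[of 1 "n div 2" "\<lambda>i. 1 - fps_X ^ (4 * i) :: int fps" "n - n div 2"]
    by (simp add: mult.commute)
  moreover have "?R \<noteq> 0"
    by (auto simp: fps_X_power_neq_one)
  ultimately show ?thesis
    by simp
qed

lemma glaisher_congruence:
  "fps_X ^ (k + 1) dvd
     (\<Prod>j=1..k. if even j then 1 + fps_X ^ j else 1) *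
     (\<Prod>j=1..k. if j mod 4 = 2 then 1 - fps_X ^ j else 1) - (1 :: int fps)"
proof -
  let ?n = "k div 2"
  have "(\<Prod>j=1..k. if j mod 4 = 2 then 1 - fps_X ^ j else (1 :: int fps)) =
        (\<Prod>j=1..k. if even j then (if odd (j div 2) then 1 - fps_X ^ j else 1) else 1)"
    by (intro prod.cong refl) (auto, presburger+)
  also have "\<dots> = (\<Prod>i=1..?n. if odd i then 1 - fps_X ^ (2 * i) else 1)"
    by (subst prod_even_reindex) simp
  finally have P2: "(\<Prod>j=1..k. if j mod 4 = 2 then 1 - fps_X ^ j else (1 :: int fps)) =
        (\<Prod>i=1..?n. if odd i then 1 - fps_X ^ (2 * i) else 1)" .
  have "fps_X ^ (k + 1) dvd (\<Prod>i=?n div 2 + 1..?n. 1 - fps_X ^ (4 * i) :: int fps) - 1"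
  proof (rule dvd_prod_diff_one)
    fix i assume "i \<in> {?n div 2 + 1..?n}"
    then have "k + 1 \<le> 4 * i" by auto
    then show "fps_X ^ (k + 1) dvd (1 - fps_X ^ (4 * i) :: int fps) - 1"
      by (simp add: le_imp_power_dvd del: power_Suc)
  qed
  moreover have "(\<Prod>j=1..k. if even j then 1 + fps_X ^ j else (1 :: int fps)) =
        (\<Prod>i=1..?n. 1 + fps_X ^ (2 * i))"
    by (rule prod_even_reindex)
  ultimately show ?thesis
    by (simp only: P2 glaisher_product)
qed

abbreviation gt1_nondvd4_gf :: "nat \<Rightarrow> int fps" where
  "gt1_nondvd4_gf \<equiv> restricted_gf (\<lambda>j. 1 < j \<and> \<not> 4 dvd j) (\<lambda>_. False)"

lemma even_distinct_gf_congruence: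
  assumes "0 < k"
  shows "fps_X ^ (k + 1) dvd even_distinct_gf k * (1 - fps_X) - gt1_nondvd4_gf k"
proof -
  let ?O = "\<Prod>j=1..k. if odd j then 1 - fps_X ^ j else 1 :: int fps"
  let ?E = "\<Prod>j=1..k. if even j then 1 + fps_X ^ j else 1 :: int fps"
  let ?P2 = "\<Prod>j=1..k. if j mod 4 = 2 then 1 - fps_X ^ j else 1 :: int fps"
  let ?P = "\<Prod>j=1..k. if 1 < j \<and> \<not> 4 dvd j then 1 - fps_X ^ j else 1 :: int fps"
  have T: "even_distinct_gf k * ?O = ?E"
    using restricted_gf_product[of "\<lambda>_. True" even k] by simp
  have Q: "gt1_nondvd4_gf k * ?P = 1"
    using restricted_gf_product[of "\<lambda>j. 1 < j \<and> \<not> 4 dvd j" "\<lambda>_. False" k] by simp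
  have "(if odd j then a else 1) * (if j mod 4 = 2 then a else 1) =
        (if j = 1 then a else 1) * (if 1 < j \<and> \<not> 4 dvd j then a else 1)"
    if "1 \<le> j" for j :: nat and a :: "int fps"
  proof -
    have "\<not> (odd j \<and> j mod 4 = 2)" and "(1 < j \<and> \<not> 4 dvd j) \<longleftrightarrow> (odd j \<and> j \<noteq> 1) \<or> j mod 4 = 2"
      using that by presburger+
    then show ?thesis by auto
  qed
  then have "?O * ?P2 = (\<Prod>j=1..k. (if j = 1 then 1 - fps_X ^ j else 1) *
                       (if 1 < j \<and> \<not> 4 dvd j then 1 - fps_X ^ j else 1))"
    unfolding prod.distrib[symmetric] by (intro prod.cong) auto
  also have "\<dots> = (1 - fps_X) * ?P"
    using assms by (simp add: prod.distrib)
  finally have OP: "?O * ?P2 = (1 - fps_X) * ?P" .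
  have "even_distinct_gf k * (1 - fps_X) - gt1_nondvd4_gf k =
        gt1_nondvd4_gf k * (even_distinct_gf k * (1 - fps_X) * ?P - 1)"
    using Q by (simp add: algebra_simps)
  also have "\<dots> = gt1_nondvd4_gf k * (?E * ?P2 - 1)"
    unfolding mult.assoc OP[symmetric] T[symmetric] ..
  finally show ?thesis
    using glaisher_congruence[of k] by (simp add: dvd_mult)
qed

lemma DE2_gf_congruence:
  "fps_X ^ (2 * N + 2) dvd (1 + fps_X ^ 3) * DE2_gf (2 * N + 1) - (gt1_nondvd4_gf (2 * N + 1) - 1)"
proof -
  define k where "k = 2 * N + 1"
  let ?T = "even_distinct_gf k"
  have exponents: "2 * N + 2 = k + 1" "4 * N + 5 = (k + 1) + (k + 2)"
    unfolding k_def by simp_all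
  then have "(1 + fps_X ^ 3) * DE2_gf k =
      ?T * (1 - fps_X + fps_X ^ (k + 1) + fps_X ^ (k + 1) * fps_X ^ (k + 2)) - 1"
    using DE2_gf_telescoping[of N] unfolding k_def[symmetric] by (simp only: power_add)
  then have "(1 + fps_X ^ 3) * DE2_gf k - (gt1_nondvd4_gf k - 1) =
        (?T * (1 - fps_X) - gt1_nondvd4_gf k) + fps_X ^ (k + 1) * (?T + fps_X ^ (k + 2) * ?T)"
    by (simp add: algebra_simps del: power_Suc)
  also have "fps_X ^ (k + 1) dvd \<dots>"
    using even_distinct_gf_congruence[of k] unfolding k_def by (simp add: dvd_add)
  finally show ?thesis
    unfolding exponents k_def[symmetric] .
qed

theorem corollary2:
  fixes n :: int
  assumes "n > 0"
  shows "DE2 n + DE2 (n - 3) =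
         card {M \<in> partitions (nat n). \<forall>x\<in>#M. 1 < x \<and> \<not> 4 dvd x}"
proof -
  define m where "m = nat n"
  have n: "n = int m" and "0 < m"
    using assms unfolding m_def by auto
  have "((1 + fps_X ^ 3) * DE2_gf (2 * m + 1)) $ m = (gt1_nondvd4_gf (2 * m + 1) - 1) $ m"
    by (rule fps_nth_eq_if_X_power_dvd_diff[OF DE2_gf_congruence]) simp
  then show ?thesis
    using \<open>0 < m\<close> unfolding n
    by (simp add: DE2_shift_nth restricted_gf_nth restricted_partitions_unbounded)
qed

end
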